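(* Let $L_x,L_y>0$, $L_{xy}\geq 0$, let $F\in\mathcal{F}(L_x, L_y, L_{xy}, 0, 0)$ with nonempty saddle point set $S^\star$, and let $t>0$. Suppose the gradient descent-ascent method with step length $t$ is linearly convergent for any initial point, i.e. there exists $\alpha\in[0,1)$ such that for every $(x^1,y^1)\in\mathbb{R}^n\times\mathbb{R}^m$ the point $x^{2}=x^1-t\nabla_x F(x^1, y^1)$, $y^{2}=y^1+t\nabla_y F(x^1, y^1)$ satisfies $d_{S^\star}^2((x^2,y^2))\leq \alpha\, d_{S^\star}^2((x^1,y^1))$. Then $F$ has a quadratic gradient growth for some $\mu_F>0$.
   Context: $\mathcal{F}(L_x, L_y, L_{xy}, 0, 0)$ denotes the set of differentiable $F:\mathbb{R}^n\times\mathbb{R}^m\to\mathbb{R}$ with $F(\cdot,y)$ convex for all $y$, $F(x,\cdot)$ concave for all $x$, and for all $x,x_1,x_2,y,y_1,y_2$: $\|\nabla_x F(x_2, y)-\nabla_x F(x_1, y)\|\leq L_x\|x_2-x_1\|$; $\|\nabla_y F(x, y_2)-\nabla_y F(x, y_1)\|\leq L_y\|y_2-y_1\|$; $\|\nabla_x F(x, y_2)-\nabla_x F(x, y_1)\|\leq L_{xy}\|y_2-y_1\|$; $\|\nabla_y F(x_2, y)-\nabla_y F(x_1, y)\|\leq L_{xy}\|x_2-x_1\|$. $S^\star$ is the set of saddle points $(x^\star,y^\star)$, i.e. $F(x^\star, y)\leq F(x^\star, y^\star)\leq F(x, y^\star)$ for all $x,y$; it is closed and convex. $d_{S^\star}(z)=\inf_{w\in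 S^\star}\|z-w\|$. $F$ has quadratic gradient growth with $\mu_F>0$ if for all $(x,y)$: $\langle \nabla_x F(x,y), x-x^\star\rangle-\langle \nabla_y F(x,y), y-y^\star\rangle \geq \mu_F\, d_{S^\star}^2((x,y))$, where $(x^\star,y^\star)$ is the Euclidean projection of $(x,y)$ onto $S^\star$. *)

theory Defs
  imports "HOL-Analysis.Analysis"
begin

definition saddle_set :: "(real^'n \<Rightarrow> real^'m \<Rightarrow> real) \<Rightarrow> ((real^'n) \<times> (real^'m)) set" where
  "saddle_set F = {(xs, ys). \<forall>x y. F xs y \<le> F xs ys \<and> F xs ys \<le> F x ys}"

definition in_class_F ::
  "real \<Rightarrow> real \<Rightarrow> real \<Rightarrow> (real^'n \<Rightarrow> real^'m \<Rightarrow> real)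
   \<Rightarrow> (real^'n \<Rightarrow> real^'m \<Rightarrow> real^'n) \<Rightarrow> (real^'n \<Rightarrow> real^'m \<Rightarrow> real^'m) \<Rightarrow> bool" where
  "in_class_F Lx Ly Lxy F Gx Gy \<longleftrightarrow>
     (\<forall>x y. ((\<lambda>(u, v). F u v) has_derivative (\<lambda>(h, k). Gx x y \<bullet> h + Gy x y \<bullet> k)) (at (x, y))) \<and>
     (\<forall>y. convex_on UNIV (\<lambda>x. F x y)) \<and>
     (\<forall>x. concave_on UNIV (\<lambda>y. F x y)) \<and>
     (\<forall>x1 x2 y. norm (Gx x2 y - Gx x1 y) \<le> Lx * norm (x2 - x1)) \<and>
     (\<forall>x y1 y2. norm (Gy x y2 - Gy x y1) \<le> Ly * norm (y2 - y1)) \<and>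
     (\<forall>x y1 y2. norm (Gx x y2 - Gx x y1) \<le> Lxy * norm (y2 - y1)) \<and>
     (\<forall>x1 x2 y. norm (Gy x2 y - Gy x1 y) \<le> Lxy * norm (x2 - x1))"

definition quadratic_gradient_growth ::
  "(real^'n \<Rightarrow> real^'m \<Rightarrow> real)
   \<Rightarrow> (real^'n \<Rightarrow> real^'m \<Rightarrow> real^'n) \<Rightarrow> (real^'n \<Rightarrow> real^'m \<Rightarrow> real^'m) \<Rightarrow> real \<Rightarrow> bool" where
  "quadratic_gradient_growth F Gx Gy \<mu> \<longleftrightarrow>
     (\<forall>x y. let (xs, ys) = closest_point (saddle_set F) (x, y) in
        Gx x y \<bullet> (x - xs) - Gy x y \<bullet> (y - ys) \<ge> \<mu> * (infdist (x, y) (saddle_set F))\<^sup>2)"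

end

theory Submission
  imports Defs
begin

text \<open>Let \<open>p\<close> be the projection of \<open>z = (x, y)\<close> onto the closed convex set \<open>S\<^sup>\<star>\<close> and
  \<open>w = t (\<nabla>\<^sub>xF, -\<nabla>\<^sub>yF)\<close>, so that one step of gradient descent-ascent moves \<open>z\<close> to \<open>z - w\<close>.
  The variational inequality of the projection \<open>q\<close> of \<open>z - w\<close>, tested at \<open>p\<close>, gives
  \<open>d\<^sup>2(z - w) \<ge> d\<^sup>2(z) - 2\<langle>z - p, w\<rangle>\<close>. Combined with \<open>d\<^sup>2(z - w) \<le> \<alpha> d\<^sup>2(z)\<close> this yields
  \<open>\<langle>z - p, w\<rangle> \<ge> (1 - \<alpha>)/2 \<cdot> d\<^sup>2(z)\<close>, which is quadratic gradient growth with
  \<open>\<mu> = (1 - \<alpha>)/(2t)\<close>.\<close>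

lemma infdist_eq_dist_closest_point:
  assumes "closed S" "S \<noteq> {}"
  shows "infdist a S = dist a (closest_point S a)"
  using assms by (simp add: infdist_eq_setdist setdist_closest_point)

lemma infdist_diff_power2_ge:
  fixes a w :: "'a::{real_inner,heine_borel}"
  assumes "convex S" "closed S" "S \<noteq> {}"
  shows "(infdist a S)\<^sup>2 - 2 * inner (a - closest_point S a) w \<le> (infdist (a - w) S)\<^sup>2"
proof -
  define p where "p = closest_point S a"
  define q where "q = closest_point S (a - w)"
  have "inner (a - p) (q - p) \<le> 0"
    unfolding p_def q_def
    by (rule closest_point_dot[OF assms(1,2) closest_point_in_set[OF assms(2,3)]])
  moreover have "(norm (a - w - q))\<^sup>2 =
      (norm (a - p))\<^sup>2 - 2 * inner (a - p) w - 2 * inner (a - p) (q - p) + (norm (w + (q - p)))\<^sup>2"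
    unfolding power2_norm_eq_inner by (simp add: algebra_simps inner_commute)
  ultimately have "(norm (a - p))\<^sup>2 - 2 * inner (a - p) w \<le> (norm (a - w - q))\<^sup>2"
    using zero_le_power2[of "norm (w + (q - p))"] by linarith
  then show ?thesis
    using assms(2,3) by (simp add: p_def q_def infdist_eq_dist_closest_point dist_norm)
qed

lemma convex_sublevel:
  assumes "convex_on S f"
  shows "convex {x \<in> S. f x \<le> c}"
proof (rule convexI)
  fix x y and u v :: real
  assume x: "x \<in> {x \<in> S. f x \<le> c}" and y: "y \<in> {x \<in> S. f x \<le> c}"
    and uv: "0 \<le> u" "0 \<le> v" "u + v = 1"
  have "f (u *\<^sub>R x + v *\<^sub>R y) \<le> u * f x + v * f y"
    using assms x y uv unfolding convex_on_def by auto
  also have "\<dots> \<le> u * c + v * c"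
    using x y uv by (intro add_mono mult_left_mono) auto
  also have "\<dots> = c"
    using uv by (simp add: distrib_right[symmetric])
  finally show "u *\<^sub>R x + v *\<^sub>R y \<in> {x \<in> S. f x \<le> c}"
    using x y uv convex_on_imp_convex[OF assms] by (auto intro: convexD)
qed

lemma convex_superlevel:
  assumes "concave_on S f"
  shows "convex {x \<in> S. c \<le> f x}"
  using convex_sublevel[of S "\<lambda>x. - f x" "- c"] assms by (simp add: concave_on_def)

lemma saddle_set_value_eq:
  assumes "(a, b) \<in> saddle_set F" "(c, d) \<in> saddle_set F"
  shows "F a b = F c d"
proof -
  have "F a b \<le> F c b" "F c b \<le> F c d" "F c d \<le> F a d" "F a d \<le> F a b"
    using assms unfolding saddle_set_def by auto
  then show ?thesis by linarith
qed

lemma saddle_set_eq_Times: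
  assumes "(a, b) \<in> saddle_set F"
  shows "saddle_set F = (\<Inter>y. {x. F x y \<le> F a b}) \<times> (\<Inter>x. {y. F a b \<le> F x y})"
proof -
  have "(c, d) \<in> saddle_set F \<longleftrightarrow> (\<forall>y. F c y \<le> F a b) \<and> (\<forall>x. F a b \<le> F x d)" for c d
  proof
    assume cd: "(c, d) \<in> saddle_set F"
    then have "F c y \<le> F c d" "F c d \<le> F x d" for x y
      unfolding saddle_set_def by blast+
    with saddle_set_value_eq[OF cd assms] show "(\<forall>y. F c y \<le> F a b) \<and> (\<forall>x. F a b \<le> F x d)"
      by simp
  next
    assume bounds: "(\<forall>y. F c y \<le> F a b) \<and> (\<forall>x. F a b \<le> F x d)"
    then have "F c d = F a b" by (meson order_antisym)
    with bounds show "(c, d) \<in> saddle_set F"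
      unfolding saddle_set_def by simp
  qed
  then show ?thesis
    by (simp add: set_eq_iff split_paired_All)
qed

lemma convex_saddle_set:
  assumes "\<And>y. convex_on UNIV (\<lambda>x. F x y)" "\<And>x. concave_on UNIV (F x)"
  shows "convex (saddle_set F)"
proof (cases "saddle_set F = {}")
  case False
  then obtain a b where "(a, b) \<in> saddle_set F" by auto
  then have eq: "saddle_set F = (\<Inter>y. {x. F x y \<le> F a b}) \<times> (\<Inter>x. {y. F a b \<le> F x y})"
    by (rule saddle_set_eq_Times)
  show ?thesis
    unfolding eq
    using convex_sublevel[OF assms(1), where c = "F a b"] convex_superlevel[OF assms(2), where c = "F a b"]
    by (auto intro!: convex_Times convex_INT)
qed simp

lemma closed_saddle_set:
  assumes "\<And>y. continuous_on UNIV (\<lambda>x. F x y)" "\<And>x. continuous_on UNIV (F x)"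
  shows "closed (saddle_set F)"
proof (cases "saddle_set F = {}")
  case False
  then obtain a b where "(a, b) \<in> saddle_set F" by auto
  then have eq: "saddle_set F = (\<Inter>y. {x. F x y \<le> F a b}) \<times> (\<Inter>x. {y. F a b \<le> F x y})"
    by (rule saddle_set_eq_Times)
  show ?thesis
    unfolding eq
    by (intro closed_Times closed_INT ballI closed_Collect_le assms continuous_on_const)
qed simp

lemma in_class_F_continuous:
  assumes "in_class_F Lx Ly Lxy F Gx Gy"
  shows "continuous_on UNIV (\<lambda>x. F x y)" "continuous_on UNIV (F x)"
proof -
  have "continuous_on UNIV (\<lambda>(u, v). F u v)"
    using assms unfolding in_class_F_def
    by (intro continuous_at_imp_continuous_on) (auto intro: has_derivative_continuous)
  then have "continuous_on UNIV (\<lambda>p. F (fst p) (snd p))"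
    by (simp add: case_prod_beta')
  from continuous_on_compose2[OF this continuous_on_Pair[OF continuous_on_id continuous_on_const]]
       continuous_on_compose2[OF this continuous_on_Pair[OF continuous_on_const continuous_on_id]]
  show "continuous_on UNIV (\<lambda>x. F x y)" "continuous_on UNIV (F x)"
    by auto
qed

theorem theorem3p4:
  fixes F :: "real^'n \<Rightarrow> real^'m \<Rightarrow> real"
    and Gx :: "real^'n \<Rightarrow> real^'m \<Rightarrow> real^'n"
    and Gy :: "real^'n \<Rightarrow> real^'m \<Rightarrow> real^'m"
    and Lx Ly Lxy t :: real
  assumes "Lx > 0" and "Ly > 0" and "Lxy \<ge> 0"
    and "in_class_F Lx Ly Lxy F Gx Gy"
    and "saddle_set F \<noteq> {}"
    and "t > 0"
    and "\<exists>\<alpha>::real. 0 \<le> \<alpha> \<and> \<alpha> < 1 \<and>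
           (\<forall>x1 y1. (infdist (x1 - t *\<^sub>R Gx x1 y1, y1 + t *\<^sub>R Gy x1 y1) (saddle_set F))\<^sup>2
                      \<le> \<alpha> * (infdist (x1, y1) (saddle_set F))\<^sup>2)"
  shows "\<exists>\<mu>>0. quadratic_gradient_growth F Gx Gy \<mu>"
proof -
  let ?S = "saddle_set F"
  obtain \<alpha> :: real where "\<alpha> < 1" and contraction:
    "\<And>x y. (infdist (x - t *\<^sub>R Gx x y, y + t *\<^sub>R Gy x y) ?S)\<^sup>2 \<le> \<alpha> * (infdist (x, y) ?S)\<^sup>2"
    using assms(7) by blast
  have "convex ?S" "closed ?S"
    using assms(4) in_class_F_continuous[OF assms(4)]
    by (auto simp: in_class_F_def intro!: convex_saddle_set closed_saddle_set)
  have "(1 - \<alpha>) / (2 * t) * (infdist (x, y) ?S)\<^sup>2 \<le> Gx x y \<bullet> (x - xs) - Gy x y \<bullet> (y - ys)"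
    if "closest_point ?S (x, y) = (xs, ys)" for x y xs ys
  proof -
    have "(infdist (x, y) ?S)\<^sup>2 - 2 * t * (Gx x y \<bullet> (x - xs) - Gy x y \<bullet> (y - ys))
        \<le> (infdist (x - t *\<^sub>R Gx x y, y + t *\<^sub>R Gy x y) ?S)\<^sup>2"
      using infdist_diff_power2_ge[OF \<open>convex ?S\<close> \<open>closed ?S\<close> assms(5),
          of "(x, y)" "(t *\<^sub>R Gx x y, - t *\<^sub>R Gy x y)"] that
      by (simp add: algebra_simps inner_commute)
    with contraction[of x y] have "(1 - \<alpha>) * (infdist (x, y) ?S)\<^sup>2
        \<le> 2 * t * (Gx x y \<bullet> (x - xs) - Gy x y \<bullet> (y - ys))"
      by (simp add: algebra_simps)
    with \<open>t > 0\<close> show ?thesis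
      by (simp add: field_simps)
  qed
  then have "quadratic_gradient_growth F Gx Gy ((1 - \<alpha>) / (2 * t))"
    unfolding quadratic_gradient_growth_def by (simp split: prod.split)
  with \<open>\<alpha> < 1\<close> \<open>t > 0\<close> show ?thesis
    by (intro exI[of _ "(1 - \<alpha>) / (2 * t)"]) simp
qed

end
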